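(* Let $\alpha\in[1,2)$, let $f_k$ ($k\in\mathbb N$) be as in an admissible system and $d_k=4^{k^2}$. There exists a constant $C>0$ such that for all $n\in\mathbb N$, all $1\le l<j\le n$ and all $1\le k\le\sqrt{\log n}$, $$\left\|S_j\big(f_k-f_k\circ T^{d_k}\big)-S_l\big(f_k-f_k\circ T^{d_k}\big)\right\|_2^2\le C(j-l)\frac{4^{(2-\alpha)k}}{k}.$$
   Context: $(\mathcal X,\mathcal B,m,T)$ is an ergodic, aperiodic probability preserving system; $\log$ is base $2$; $\|\cdot\|_2$ is the $L^2(m)$ norm. $S_n(h):=\sum_{i=0}^{n-1}h\circ T^i$. $S_\alpha(\sigma,\beta,\mu)$ denotes the stable law with characteristic function $\exp\{-\sigma^\alpha|\theta|^\alpha(1-i\beta\,\mathrm{sign}(\theta)\tan(\pi\alpha/2))+i\mu\theta\}$ ($\alpha\neq1$), resp. $\exp\{-\sigma|\theta|(1+i\beta\frac2\pi\mathrm{sign}(\theta)\ln|\theta|)+i\mu\theta\}$ ($\alpha=1$). Triangular array: on $(\Omega,\mathcal F,\mathbb P)$ let $\{X_k(m):k,m\in\mathbb N\}$ be independent with $X_k(m)\sim S_\alpha(k^{-1/\alpha},1,0)$; $Y_k(m):=X_k(m)\mathbf 1_{[2^k\le X_k(m)\le4^k]}$; $Z_k(m):=\sum_{j=8^k}^{16^k}\frac{j}{4^k}\mathbf 1_{[j/4^k\le Y_k(m)<(j+1)/4^k]}$. Let $d_k:=4^{k^2}$. An admissible system is a sequence of measurable $f_k:\mathcal X\to\mathbb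 R$ such that the family $\{f_k\circ T^j:k\in\mathbb N,0\le j<2d_k\}$ has under $m$ the same joint distribution as $\{Z_k(j+1):k\in\mathbb N,0\le j<2d_k\}$, together with $g_k:=f_k\circ T^{d_k}$. *)

theory Defs
  imports "HOL-Probability.Probability"
begin

definition mpt :: "'a measure \<Rightarrow> ('a \<Rightarrow> 'a) \<Rightarrow> bool" where
  "mpt M T \<longleftrightarrow> T \<in> M \<rightarrow>\<^sub>M M \<and> distr M M T = M"

definition ergodic :: "'a measure \<Rightarrow> ('a \<Rightarrow> 'a) \<Rightarrow> bool" where
  "ergodic M T \<longleftrightarrow> (\<forall>A \<in> sets M. T -` A \<inter> space M = A \<longrightarrow>
      measure M A = 0 \<or> measure M A = 1)"

definition aperiodic :: "'a measure \<Rightarrow> ('a \<Rightarrow> 'a) \<Rightarrow> bool" where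
  "aperiodic M T \<longleftrightarrow> (AE x in M. \<forall>n::nat. n > 0 \<longrightarrow> (T ^^ n) x \<noteq> x)"

definition birkhoff_sum :: "('a \<Rightarrow> 'a) \<Rightarrow> nat \<Rightarrow> ('a \<Rightarrow> real) \<Rightarrow> 'a \<Rightarrow> real" where
  "birkhoff_sum T n h x = (\<Sum>i<n. h ((T ^^ i) x))"

definition stable_cf :: "real \<Rightarrow> real \<Rightarrow> real \<Rightarrow> real \<Rightarrow> real \<Rightarrow> complex" where
  "stable_cf \<alpha> \<sigma> \<beta> \<mu> \<theta> =
    (if \<alpha> \<noteq> 1 then
       exp (- complex_of_real (\<sigma> powr \<alpha> * \<bar>\<theta>\<bar> powr \<alpha>)
              * (1 - \<i> * complex_of_real (\<beta> * sgn \<theta> * tan (pi * \<alpha> / 2)))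
            + \<i> * complex_of_real (\<mu> * \<theta>))
     else
       exp (- complex_of_real (\<sigma> * \<bar>\<theta>\<bar>)
              * (1 + \<i> * complex_of_real (\<beta> * (2 / pi) * sgn \<theta> * ln \<bar>\<theta>\<bar>))
            + \<i> * complex_of_real (\<mu> * \<theta>)))"

definition dk :: "nat \<Rightarrow> nat" where
  "dk k = 4 ^ (k\<^sup>2)"

definition Ytrunc :: "nat \<Rightarrow> real \<Rightarrow> real" where
  "Ytrunc k x = x * indicator {2 ^ k .. 4 ^ k} x"

definition Zdisc :: "nat \<Rightarrow> real \<Rightarrow> real" where
  "Zdisc k x = (\<Sum>j \<in> {8 ^ k .. 16 ^ k :: nat}.
      real j / 4 ^ k * indicator {real j / 4 ^ k ..< (real j + 1) / 4 ^ k} (Ytrunc k x))"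

definition adm_index :: "(nat \<times> nat) set" where
  "adm_index = {(k, j). 1 \<le> k \<and> j < 2 * dk k}"

definition admissible :: "real \<Rightarrow> 'a measure \<Rightarrow> ('a \<Rightarrow> 'a) \<Rightarrow> (nat \<Rightarrow> 'a \<Rightarrow> real) \<Rightarrow> bool" where
  "admissible \<alpha> M T f \<longleftrightarrow>
     (\<forall>k. f k \<in> borel_measurable M) \<and>
     (\<exists>(P :: (nat \<Rightarrow> nat \<Rightarrow> real) measure) (X :: nat \<Rightarrow> nat \<Rightarrow> (nat \<Rightarrow> nat \<Rightarrow> real) \<Rightarrow> real).
        prob_space P \<and>
        prob_space.indep_vars P (\<lambda>_. borel) (\<lambda>(k, m). X k m) {(k, m). 1 \<le> k \<and> 1 \<le> m} \<and>
        (\<forall>k m. 1 \<le> k \<longrightarrow> 1 \<le> m \<longrightarrow>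
           char (distr P borel (X k m)) = stable_cf \<alpha> (real k powr (-1 / \<alpha>)) 1 0) \<and>
        distr M (PiM adm_index (\<lambda>_. borel))
             (\<lambda>x. \<lambda>i \<in> adm_index. f (fst i) ((T ^^ snd i) x))
        = distr P (PiM adm_index (\<lambda>_. borel))
             (\<lambda>\<omega>. \<lambda>i \<in> adm_index. Zdisc (fst i) (X (fst i) (snd i + 1) \<omega>)))"

end

theory Submission
  imports Defs
begin

text \<open>
  Write \<open>g i = f k \<circ> T^i\<close> and \<open>d = d_k\<close>. By admissibility \<open>g 0, ..., g (2d - 1)\<close> are
  independent copies of \<open>Z_k\<close>, hence uncorrelated with a common variance \<open>v\<close>. For
  \<open>h = f k - f k \<circ> T^d\<close> the increment \<open>S_j h - S_l h\<close> is \<open>S_m h \<circ> T^l\<close> with \<open>m = j - l\<close>.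
  If \<open>m \<le> d\<close> then \<open>S_m h\<close> is a \<open>\<plusminus>1\<close>-combination of \<open>2m\<close> of the centred \<open>g i\<close>; if \<open>m \<ge> d\<close>
  it telescopes to \<open>A - A \<circ> T^m\<close> with \<open>A = \<Sum>i<d. g i\<close>. Either way \<open>\<parallel>S_m h\<parallel>\<^sub>2\<^sup>2 \<le> 4 m v\<close>.

  Since \<open>0 \<le> Z_k \<le> X\<close> and \<open>Z_k\<close> vanishes unless \<open>X \<le> 4^k\<close>, \<open>v\<close> is at most the truncated
  second moment \<open>E [X\<^sup>2; |X| \<le> 4^k]\<close>. As \<open>1 - cos y \<ge> y\<^sup>2/3\<close> for \<open>|y| \<le> 1\<close>, the latter is
  at most \<open>3 \<cdot> 16^k \<cdot> Re (1 - \<phi> (4^-k))\<close>, and the explicit characteristic function \<open>\<phi>\<close> of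
  \<open>S_\<alpha>(k^(-1/\<alpha>), 1, 0)\<close> satisfies \<open>Re (1 - \<phi> t) \<le> C |t|^\<alpha> / k\<close> for \<open>|t| \<le> 1\<close>.
\<close>

lemma one_minus_cos_le: "1 - cos (y::real) \<le> y\<^sup>2 / 2"
proof -
  have "1 - cos y = 2 * (sin (y/2))\<^sup>2"
    using cos_double_sin[of "y/2"] by simp
  moreover have "(sin (y/2))\<^sup>2 \<le> (y/2)\<^sup>2"
    using abs_sin_x_le_abs_x[of "y/2"] by (metis abs_ge_zero power2_abs power_mono)
  ultimately show ?thesis by (simp add: power_divide)
qed

lemma one_minus_cos_ge:
  assumes "\<bar>y::real\<bar> \<le> 1"
  shows "y\<^sup>2 / 3 \<le> 1 - cos y"
proof -
  obtain t where "cos y = (\<Sum>m<4. cos_coeff m * y ^ m) + cos (t + 1/2 * real 4 * pi) / fact 4 * y ^ 4"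
    using Maclaurin_cos_expansion by blast
  then have c: "cos y = 1 - y\<^sup>2 / 2 + cos t / 24 * y ^ 4"
    by (simp add: cos_coeff_def lessThan_nat_numeral fact_numeral power2_eq_square)
  have "y\<^sup>2 \<le> 1" using assms by (simp add: abs_square_le_1)
  then have "y ^ 4 \<le> y\<^sup>2"
    by (metis (no_types) mult_left_le_one_le numeral_Bit0 power_add zero_le_power2)
  moreover have "cos t / 24 * y ^ 4 \<le> y ^ 4 / 24"
    using mult_right_mono[OF cos_le_one, of "y ^ 4" t] by simp
  ultimately show ?thesis using c zero_le_power2[of y] by linarith
qed

lemma re_one_minus_exp_le:
  assumes "0 \<le> p"
  shows "Re (1 - exp (- complex_of_real p * (1 + \<i> * complex_of_real c))) \<le> p + (p * c)\<^sup>2 / 2"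
proof -
  have "- complex_of_real p * (1 + \<i> * complex_of_real c) = complex_of_real (- p) + \<i> * complex_of_real (- (p * c))"
    by (simp add: algebra_simps)
  then have "Re (1 - exp (- complex_of_real p * (1 + \<i> * complex_of_real c))) = 1 - exp (-p) * cos (p * c)"
    by (simp only: Re_exp Re_complex_of_real Im_complex_of_real exp_plus_inverse_exp) (simp add: Re_exp)
  moreover have "1 - exp (-p) \<le> p"
    using exp_ge_add_one_self[of "-p"] by simp
  moreover have "exp (-p) * (1 - cos (p * c)) \<le> 1 - cos (p * c)"
    using assms by (intro mult_left_le_one_le) auto
  moreover have "1 - exp (-p) * cos (p * c) = (1 - exp (-p)) + exp (-p) * (1 - cos (p * c))"
    by (simp add: algebra_simps)
  ultimately show ?thesis
    using one_minus_cos_le[of "p * c"] by linarith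
qed

lemma mult_ln_square_le:
  assumes "0 < (s::real)" "s \<le> 1"
  shows "s * (ln s)\<^sup>2 \<le> 4"
proof -
  have "ln (1 / sqrt s) \<le> 1 / sqrt s - 1"
    using assms by (intro ln_le_minus_one) auto
  moreover have "ln (1 / sqrt s) = - ln s / 2"
    using assms by (simp add: ln_div ln_sqrt)
  ultimately have "- ln s \<le> 2 / sqrt s"
    by (simp add: field_simps)
  moreover have "ln s \<le> 0"
    using assms by simp
  ultimately have "(ln s)\<^sup>2 \<le> (2 / sqrt s)\<^sup>2"
    by (metis abs_of_nonpos power2_abs power_mono abs_ge_zero)
  also have "\<dots> = 4 / s"
    using assms by (simp add: power_divide)
  finally show ?thesis
    using assms by (simp add: field_simps)
qed

lemma re_one_minus_stable_cf_cauchy_le: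
  fixes \<kappa> t :: real
  assumes \<kappa>: "1 \<le> \<kappa>" and t: "\<bar>t\<bar> \<le> 1"
  shows "Re (1 - stable_cf 1 (\<kappa> powr (-1)) 1 0 t) \<le> 3 * \<bar>t\<bar> / \<kappa>"
proof -
  define p where "p = \<bar>t\<bar> / \<kappa>"
  define c where "c = (2/pi) * sgn t * ln \<bar>t\<bar>"
  have "\<kappa> powr (-1) = 1 / \<kappa>"
    using \<kappa> by (simp add: powr_minus_divide)
  then have "Re (1 - stable_cf 1 (\<kappa> powr (-1)) 1 0 t)
      = Re (1 - exp (- complex_of_real p * (1 + \<i> * complex_of_real c)))"
    by (simp add: stable_cf_def p_def c_def)
  also have "\<dots> \<le> p + (p * c)\<^sup>2 / 2"
    using \<kappa> by (intro re_one_minus_exp_le) (simp add: p_def)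
  finally have re: "Re (1 - stable_cf 1 (\<kappa> powr (-1)) 1 0 t) \<le> p + (p * c)\<^sup>2 / 2" .
  have "(p * c)\<^sup>2 \<le> 4 * \<bar>t\<bar> / \<kappa>"
  proof (cases "t = 0")
    case False
    have "(sgn t)\<^sup>2 = 1"
      using False by (simp add: sgn_if)
    then have "c\<^sup>2 = (4 / pi\<^sup>2) * (ln \<bar>t\<bar>)\<^sup>2"
      by (simp add: c_def power_mult_distrib power_divide)
    then have "(p * c)\<^sup>2 = (\<bar>t\<bar> / \<kappa>)\<^sup>2 * ((4 / pi\<^sup>2) * (ln \<bar>t\<bar>)\<^sup>2)"
      unfolding power_mult_distrib p_def by (simp only:)
    also have "\<dots> = (4 / pi\<^sup>2) * (\<bar>t\<bar> * (\<bar>t\<bar> * (ln \<bar>t\<bar>)\<^sup>2)) / \<kappa>\<^sup>2"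
      by (simp add: power_divide power_mult_distrib mult_ac power2_eq_square)
    also have "\<dots> \<le> 1 * (\<bar>t\<bar> * 4) / \<kappa>\<^sup>2"
    proof -
      have "3 * 3 \<le> pi * pi"
        using pi_gt3 by (intro mult_mono) auto
      then have pi: "4 / pi\<^sup>2 \<le> 1"
        by (simp add: power2_eq_square)
      have "\<bar>t\<bar> * (\<bar>t\<bar> * (ln \<bar>t\<bar>)\<^sup>2) \<le> \<bar>t\<bar> * 4"
        using mult_ln_square_le[of "\<bar>t\<bar>"] False t by (intro mult_left_mono) auto
      from mult_mono[OF pi this] show ?thesis
        by (intro divide_right_mono) auto
    qed
    also have "\<dots> \<le> 4 * \<bar>t\<bar> / \<kappa>"
      using \<kappa> by (simp add: power2_eq_square divide_le_cancel frac_le)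
    finally show ?thesis .
  qed (simp add: p_def)
  with re show ?thesis
    by (simp add: p_def add_divide_distrib)
qed

lemma re_one_minus_stable_cf_noncauchy_le:
  fixes \<alpha> \<kappa> t :: real
  assumes \<alpha>: "0 < \<alpha>" "\<alpha> \<noteq> 1" and \<kappa>: "1 \<le> \<kappa>" and t: "\<bar>t\<bar> \<le> 1"
  shows "Re (1 - stable_cf \<alpha> (\<kappa> powr (-1/\<alpha>)) 1 0 t) \<le> (1 + (tan (pi * \<alpha> / 2))\<^sup>2) * \<bar>t\<bar> powr \<alpha> / \<kappa>"
proof -
  define p where "p = \<bar>t\<bar> powr \<alpha> / \<kappa>"
  define c where "c = - sgn t * tan (pi * \<alpha> / 2)"
  have p: "0 \<le> p" "p \<le> 1"
  proof -
    have "\<bar>t\<bar> powr \<alpha> \<le> 1 powr \<alpha>"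
      using t \<alpha> by (intro powr_mono2) auto
    then show "0 \<le> p" "p \<le> 1"
      using \<kappa> by (auto simp: p_def)
  qed
  have "(\<kappa> powr (-1/\<alpha>)) powr \<alpha> = \<kappa> powr (-1)"
    using \<alpha> by (simp add: powr_powr)
  also have "\<dots> = 1 / \<kappa>"
    using \<kappa> by (simp add: powr_minus_divide)
  finally have "Re (1 - stable_cf \<alpha> (\<kappa> powr (-1/\<alpha>)) 1 0 t)
      = Re (1 - exp (- complex_of_real p * (1 + \<i> * complex_of_real c)))"
    using \<alpha> by (simp add: stable_cf_def p_def c_def)
  also have "\<dots> \<le> p + (p * c)\<^sup>2 / 2"
    using p by (intro re_one_minus_exp_le)
  also have "(p * c)\<^sup>2 \<le> p * (tan (pi * \<alpha> / 2))\<^sup>2"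
  proof -
    have "p\<^sup>2 \<le> p"
      using p by (simp add: power2_eq_square mult_left_le_one_le)
    moreover have "c\<^sup>2 \<le> (tan (pi * \<alpha> / 2))\<^sup>2"
      by (simp add: c_def power_mult_distrib sgn_if)
    ultimately show ?thesis
      using p by (simp add: power_mult_distrib mult_mono)
  qed
  finally have "Re (1 - stable_cf \<alpha> (\<kappa> powr (-1/\<alpha>)) 1 0 t) \<le> p + p * (tan (pi * \<alpha> / 2))\<^sup>2 / 2"
    by simp
  moreover have "0 \<le> p * (tan (pi * \<alpha> / 2))\<^sup>2"
    using p by simp
  moreover have "(1 + (tan (pi * \<alpha> / 2))\<^sup>2) * \<bar>t\<bar> powr \<alpha> / \<kappa> = p + p * (tan (pi * \<alpha> / 2))\<^sup>2"
    by (simp add: p_def algebra_simps add_divide_distrib)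
  ultimately show ?thesis
    by linarith
qed

lemma re_one_minus_stable_cf_le:
  fixes \<alpha> \<kappa> t :: real
  assumes \<alpha>: "0 < \<alpha>" and \<kappa>: "1 \<le> \<kappa>" and t: "\<bar>t\<bar> \<le> 1"
  shows "Re (1 - stable_cf \<alpha> (\<kappa> powr (-1/\<alpha>)) 1 0 t) \<le> (3 + (tan (pi * \<alpha> / 2))\<^sup>2) * \<bar>t\<bar> powr \<alpha> / \<kappa>"
proof (cases "\<alpha> = 1")
  case True
  then have "Re (1 - stable_cf \<alpha> (\<kappa> powr (-1/\<alpha>)) 1 0 t) \<le> 3 * \<bar>t\<bar> / \<kappa>"
    using re_one_minus_stable_cf_cauchy_le[OF \<kappa> t] by simp
  also have "\<dots> \<le> (3 + (tan (pi * \<alpha> / 2))\<^sup>2) * \<bar>t\<bar> powr \<alpha> / \<kappa>"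
    using True \<kappa> by (intro divide_right_mono mult_right_mono) auto
  finally show ?thesis .
next
  case False
  then have "Re (1 - stable_cf \<alpha> (\<kappa> powr (-1/\<alpha>)) 1 0 t) \<le> (1 + (tan (pi * \<alpha> / 2))\<^sup>2) * \<bar>t\<bar> powr \<alpha> / \<kappa>"
    using re_one_minus_stable_cf_noncauchy_le[OF \<alpha> False \<kappa> t] by simp
  also have "\<dots> \<le> (3 + (tan (pi * \<alpha> / 2))\<^sup>2) * \<bar>t\<bar> powr \<alpha> / \<kappa>"
    using \<kappa> by (intro divide_right_mono mult_right_mono) auto
  finally show ?thesis .
qed

lemma (in real_distribution) truncated_second_moment_le_char:
  assumes t: "t > 0"
  shows "(\<integral>x. x\<^sup>2 * indicator {-1/t..1/t} x \<partial>M) \<le> 3 / t\<^sup>2 * Re (1 - char M t)"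
proof -
  have int_cos: "integrable M (\<lambda>x. cos (t * x))"
    by (intro integrable_const_bound[where B=1]) auto
  have "Re (char M t) = (\<integral>x. Re (iexp (t * x)) \<partial>M)"
    unfolding char_def by (rule integral_Re[symmetric], rule integrable_iexp) auto
  also have "\<dots> = (\<integral>x. cos (t * x) \<partial>M)"
    by (simp add: Re_exp)
  finally have re_char: "Re (1 - char M t) = (\<integral>x. 1 - cos (t * x) \<partial>M)"
    using int_cos by (simp add: prob_space flip: space_eq_univ)
  have "(\<integral>x. x\<^sup>2 * indicator {-1/t..1/t} x \<partial>M) \<le> (\<integral>x. 3 / t\<^sup>2 * (1 - cos (t * x)) \<partial>M)"
  proof (rule integral_mono)
    show "integrable M (\<lambda>x. x\<^sup>2 * indicator {-1/t..1/t} x)"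
    proof (rule integrable_const_bound[where B="1 / t\<^sup>2"])
      show "AE x in M. norm (x\<^sup>2 * indicator {-1/t..1/t} x) \<le> 1 / t\<^sup>2"
        using t by (auto split: split_indicator simp: abs_square_le_1 power_divide
           intro!: power_mono[of "\<bar>x\<bar>" "1/t" 2 for x, simplified])
    qed simp
    show "integrable M (\<lambda>x. 3 / t\<^sup>2 * (1 - cos (t * x)))"
      using int_cos by simp
    fix x
    show "x\<^sup>2 * indicator {-1/t..1/t} x \<le> 3 / t\<^sup>2 * (1 - cos (t * x))"
    proof (cases "x \<in> {-1/t..1/t}")
      case True
      then have "\<bar>t * x\<bar> \<le> 1" using t by (auto simp: abs_mult field_simps)
      then have "(t * x)\<^sup>2 / 3 \<le> 1 - cos (t * x)" by (rule one_minus_cos_ge)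
      then show ?thesis using True t by (simp add: field_simps power_mult_distrib)
    qed auto
  qed
  also have "\<dots> = 3 / t\<^sup>2 * Re (1 - char M t)"
    unfolding re_char by (rule integral_mult_right_zero)
  finally show ?thesis .
qed

lemma Zdisc_measurable [measurable]: "Zdisc k \<in> borel_measurable borel"
  unfolding Zdisc_def Ytrunc_def by measurable

lemma Zdisc_nonzeroD:
  assumes "Zdisc k x \<noteq> 0"
  shows "2 ^ k \<le> x" "x \<le> 4 ^ k" "0 \<le> Zdisc k x" "Zdisc k x \<le> x"
proof -
  define S where "S = {8 ^ k .. 16 ^ k :: nat}"
  define y where "y = Ytrunc k x"
  define I where "I j = {real j / 4 ^ k ..< (real j + 1) / 4 ^ k}" for j :: nat
  have Z: "Zdisc k x = (\<Sum>j\<in>S. real j / 4 ^ k * indicator (I j) y)"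
    by (simp add: Zdisc_def S_def y_def I_def)
  obtain j0 where j0: "j0 \<in> S" "real j0 / 4 ^ k * indicator (I j0) y \<noteq> 0"
    using assms unfolding Z by (rule sum.not_neutral_contains_not_neutral)
  have yI: "y \<in> I j0" using j0(2) by (cases "y \<in> I j0") auto
  have "(1::nat) \<le> 8 ^ k" using one_le_power[of "8::nat" k] by simp
  then have "1 \<le> j0" using j0(1) unfolding S_def atLeastAtMost_iff by linarith
  then have "0 < y" using yI by (auto simp: I_def intro: less_le_trans[of 0 "real j0 / 4^k"])
  then have xin: "x \<in> {2 ^ k .. 4 ^ k}"
    by (cases "x \<in> {2 ^ k .. 4 ^ k}") (auto simp: y_def Ytrunc_def simp del: atLeastAtMost_iff)
  then have yx: "y = x" by (simp add: y_def Ytrunc_def)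
  show "2 ^ k \<le> x" "x \<le> 4 ^ k" using xin by auto
  have uniq: "j = j0" if "j \<in> S" "y \<in> I j" for j
  proof -
    have "real j / 4 ^ k < (real j0 + 1) / 4 ^ k" "real j0 / 4 ^ k < (real j + 1) / 4 ^ k"
      using that yI by (auto simp: I_def)
    then have "real j < real j0 + 1" "real j0 < real j + 1" by (auto simp: divide_less_cancel)
    then show ?thesis by linarith
  qed
  have "Zdisc k x = (\<Sum>j\<in>S. if j = j0 then real j / 4 ^ k * indicator (I j) y else 0)"
    unfolding Z by (rule sum.cong) (auto split: split_indicator dest: uniq)
  also have "\<dots> = real j0 / 4 ^ k" using j0(1) yI by (simp add: S_def sum.delta)
  finally have Zj: "Zdisc k x = real j0 / 4 ^ k" .
  then show "0 \<le> Zdisc k x" by simp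
  show "Zdisc k x \<le> x" using Zj yI yx by (simp add: I_def)
qed

lemma Zdisc_nonneg: "0 \<le> Zdisc k x"
  using Zdisc_nonzeroD(3)[of k x] by (cases "Zdisc k x = 0") auto

lemma Zdisc_le: "Zdisc k x \<le> 4 ^ k"
  using Zdisc_nonzeroD(2,4)[of k x] by (cases "Zdisc k x = 0") auto

lemma Zdisc_square_le: "(Zdisc k x)\<^sup>2 \<le> x\<^sup>2 * indicator {-(4 ^ k)..4 ^ k} x"
proof (cases "Zdisc k x = 0")
  case False
  note Z = Zdisc_nonzeroD[OF False]
  have "(Zdisc k x)\<^sup>2 \<le> x\<^sup>2"
    using Z by (intro power_mono) auto
  moreover have "x \<in> {-(4 ^ k)..4 ^ k}"
    using Z order_trans[OF zero_le_power[of "2::real" k]] by auto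
  ultimately show ?thesis by simp
qed simp

lemma stable_Zdisc_second_moment_le:
  fixes \<alpha> :: real and N :: "real measure"
  assumes N: "real_distribution N" and char_N: "char N = stable_cf \<alpha> (real k powr (-1/\<alpha>)) 1 0"
    and \<alpha>: "0 < \<alpha>" and k: "1 \<le> k"
  shows "(\<integral>x. (Zdisc k x)\<^sup>2 \<partial>N) \<le> 3 * (3 + (tan (pi * \<alpha> / 2))\<^sup>2) * 4 powr ((2 - \<alpha>) * k) / k"
proof -
  interpret real_distribution N by fact
  define t :: real where "t = 1 / 4 ^ k"
  have t: "0 < t" "t \<le> 1"
    by (simp_all add: t_def)
  have "(\<integral>x. (Zdisc k x)\<^sup>2 \<partial>N) \<le> (\<integral>x. x\<^sup>2 * indicator {-1/t..1/t} x \<partial>N)"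
  proof (rule integral_mono)
    show "integrable N (\<lambda>x. (Zdisc k x)\<^sup>2)"
      by (intro integrable_const_bound[where B="(4 ^ k)\<^sup>2"])
         (auto intro!: power_mono Zdisc_le Zdisc_nonneg)
    have "x\<^sup>2 * indicator {-1/t..1/t} x \<le> (4 ^ k)\<^sup>2" for x :: real
      by (auto simp: t_def abs_le_iff split: split_indicator simp flip: abs_le_square_iff)
    then show "integrable N (\<lambda>x. x\<^sup>2 * indicator {-1/t..1/t} x)"
      by (intro integrable_const_bound[where B="(4 ^ k)\<^sup>2"]) auto
    show "(Zdisc k x)\<^sup>2 \<le> x\<^sup>2 * indicator {-1/t..1/t} x" for x
      using Zdisc_square_le[of k x] by (simp add: t_def)
  qed
  also have "\<dots> \<le> 3 / t\<^sup>2 * Re (1 - char N t)"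
    using t(1) by (rule truncated_second_moment_le_char)
  also have "\<dots> \<le> 3 / t\<^sup>2 * ((3 + (tan (pi * \<alpha> / 2))\<^sup>2) * \<bar>t\<bar> powr \<alpha> / k)"
    unfolding char_N using re_one_minus_stable_cf_le[OF \<alpha> _ , of k t] t k
    by (intro mult_left_mono) auto
  also have "\<dots> = (3 + (tan (pi * \<alpha> / 2))\<^sup>2) * (3 / t\<^sup>2 * \<bar>t\<bar> powr \<alpha>) / k"
    by simp
  also have "3 / t\<^sup>2 * \<bar>t\<bar> powr \<alpha> = 3 * 4 powr ((2 - \<alpha>) * k)"
  proof -
    have "3 / t\<^sup>2 * \<bar>t\<bar> powr \<alpha> = 3 * (4 powr (2 * k) * 4 powr (- \<alpha> * k))"
      using t by (simp add: t_def powr_realpow[symmetric] powr_divide powr_powr powr_minus_divide power2_eq_square powr_add[symmetric] mult.commute)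
    then show ?thesis
      by (simp add: powr_add[symmetric] algebra_simps)
  qed
  finally show ?thesis
    by (simp only: mult.assoc mult.left_commute[of 3])
qed

lemma mpt_funpow:
  assumes "mpt M T"
  shows "mpt M (T ^^ n)"
proof (induction n)
  case 0
  then show ?case by (simp add: mpt_def distr_id2)
next
  case (Suc n)
  have T: "T \<in> M \<rightarrow>\<^sub>M M" "distr M M T = M"
    using assms by (auto simp: mpt_def)
  have Tn: "T ^^ n \<in> M \<rightarrow>\<^sub>M M" "distr M M (T ^^ n) = M"
    using Suc by (auto simp: mpt_def)
  have "T ^^ Suc n \<in> M \<rightarrow>\<^sub>M M"
    using Tn(1) T(1) by (simp add: measurable_comp)
  moreover have "distr M M (T ^^ Suc n) = distr (distr M M (T ^^ n)) M T"
    using Tn(1) T(1) by (simp add: distr_distr)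
  ultimately show ?case
    using T(2) Tn(2) unfolding mpt_def by simp
qed

lemma mpt_funpow_measurable: "mpt M T \<Longrightarrow> T ^^ n \<in> M \<rightarrow>\<^sub>M M"
  using mpt_funpow[of M T n] by (simp add: mpt_def)

lemma mpt_integral_comp:
  fixes F :: "'a \<Rightarrow> real"
  assumes "mpt M T" and "F \<in> borel_measurable M"
  shows "(\<integral>x. F (T x) \<partial>M) = (\<integral>x. F x \<partial>M)"
  using assms integral_distr[of T M M F] by (simp add: mpt_def)

lemma mpt_integrable_comp_iff:
  fixes F :: "'a \<Rightarrow> real"
  assumes "mpt M T" and "F \<in> borel_measurable M"
  shows "integrable M (\<lambda>x. F (T x)) \<longleftrightarrow> integrable M F"
  using assms integrable_distr_eq[of T M M F] by (simp add: mpt_def)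

lemma birkhoff_sum_add:
  "birkhoff_sum T (l + m) h x = birkhoff_sum T l h x + birkhoff_sum T m h ((T ^^ l) x)"
proof -
  have "birkhoff_sum T (l + m) h x = (\<Sum>i<l. h ((T ^^ i) x)) + (\<Sum>i\<in>{l..<l+m}. h ((T ^^ i) x))"
    unfolding birkhoff_sum_def by (simp add: sum.atLeastLessThan_concat[symmetric] lessThan_atLeast0)
  also have "(\<Sum>i\<in>{l..<l+m}. h ((T ^^ i) x)) = (\<Sum>i<m. h ((T ^^ (i + l)) x))"
    using sum.shift_bounds_nat_ivl[of "\<lambda>i. h ((T ^^ i) x)" 0 l m]
    by (simp add: lessThan_atLeast0 add.commute[of l])
  finally show ?thesis
    unfolding birkhoff_sum_def by (simp add: funpow_add)
qed

lemma integral_square_sum_orthogonal: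
  fixes g :: "'i \<Rightarrow> 'a \<Rightarrow> real"
  assumes I: "finite I"
    and int: "\<And>i j. i \<in> I \<Longrightarrow> j \<in> I \<Longrightarrow> integrable M (\<lambda>x. g i x * g j x)"
    and orth: "\<And>i j. i \<in> I \<Longrightarrow> j \<in> I \<Longrightarrow> (\<integral>x. g i x * g j x \<partial>M) = (if i = j then v else 0)"
  shows "(\<integral>x. (\<Sum>i\<in>I. w i * g i x)\<^sup>2 \<partial>M) = v * (\<Sum>i\<in>I. (w i)\<^sup>2)"
    and "integrable M (\<lambda>x. (\<Sum>i\<in>I. w i * g i x)\<^sup>2)"
proof -
  have expand: "(\<Sum>i\<in>I. w i * g i x)\<^sup>2 = (\<Sum>i\<in>I. \<Sum>j\<in>I. (w i * w j) * (g i x * g j x))" for x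
    by (simp add: power2_eq_square sum_product algebra_simps)
  show "integrable M (\<lambda>x. (\<Sum>i\<in>I. w i * g i x)\<^sup>2)"
    unfolding expand by (intro Bochner_Integration.integrable_sum integrable_mult_right int)
  have "(\<integral>x. (\<Sum>i\<in>I. w i * g i x)\<^sup>2 \<partial>M) = (\<Sum>i\<in>I. \<Sum>j\<in>I. (w i * w j) * (\<integral>x. g i x * g j x \<partial>M))"
    unfolding expand by (simp add: Bochner_Integration.integrable_sum integrable_mult_right int)
  also have "\<dots> = (\<Sum>i\<in>I. \<Sum>j\<in>I. if i = j then v * (w i)\<^sup>2 else 0)"
    by (intro sum.cong refl) (simp add: orth power2_eq_square)
  also have "\<dots> = v * (\<Sum>i\<in>I. (w i)\<^sup>2)"
    using I by (simp add: sum_distrib_left)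
  finally show "(\<integral>x. (\<Sum>i\<in>I. w i * g i x)\<^sup>2 \<partial>M) = v * (\<Sum>i\<in>I. (w i)\<^sup>2)" .
qed

lemma sum_diff_shift_telescope:
  fixes a :: "nat \<Rightarrow> real"
  assumes "d \<le> m"
  shows "(\<Sum>i<m. a i - a (i + d)) = (\<Sum>i<d. a i) - (\<Sum>i<d. a (i + m))"
  using assms
proof (induction m rule: nat_induct_at_least)
  case (Suc m)
  have "(\<Sum>i<d. a (i + Suc m)) = (\<Sum>i<d. a (i + m)) + (a (d + m) - a m)"
    using sum_lessThan_telescope[of "\<lambda>n. a (n + m)" d] by (simp add: sum_subtractf)
  then show ?case
    using Suc by (simp add: add.commute)
qed (simp add: sum_subtractf)

lemma sum_diff_shift_disjoint:
  fixes a :: "nat \<Rightarrow> real"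
  assumes "m \<le> d"
  shows "(\<Sum>i<m. a i - a (i + d)) = (\<Sum>i\<in>{..<m} \<union> {d..<d+m}. (if i < d then 1 else -1) * a i)"
proof -
  have "(\<Sum>i\<in>{..<m} \<union> {d..<d+m}. (if i < d then 1 else -1) * a i)
      = (\<Sum>i<m. (if i < d then 1 else -1) * a i) + (\<Sum>i\<in>{d..<d+m}. (if i < d then 1 else -1) * a i)"
    using assms by (intro sum.union_disjoint) auto
  also have "\<dots> = (\<Sum>i<m. a i) + (\<Sum>i\<in>{d..<d+m}. - a i)"
    using assms by (intro arg_cong2[where f="(+)"] sum.cong) auto
  also have "(\<Sum>i\<in>{d..<d+m}. - a i) = (\<Sum>i<m. - a (i + d))"
    using sum.shift_bounds_nat_ivl[of "\<lambda>i. - a i" 0 d m] by (simp add: lessThan_atLeast0 add.commute)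
  finally show ?thesis
    by (simp add: sum_subtractf sum_negf)
qed

locale uncorrelated_block =
  fixes M :: "'a measure" and T :: "'a \<Rightarrow> 'a" and F :: "'a \<Rightarrow> real" and \<mu> v :: real and d :: nat
  assumes mpt: "mpt M T"
    and F_measurable [measurable]: "F \<in> borel_measurable M"
    and d_pos: "0 < d"
    and cov_integrable: "\<And>i j. i < 2 * d \<Longrightarrow> j < 2 * d \<Longrightarrow>
      integrable M (\<lambda>x. (F ((T ^^ i) x) - \<mu>) * (F ((T ^^ j) x) - \<mu>))"
    and cov: "\<And>i j. i < 2 * d \<Longrightarrow> j < 2 * d \<Longrightarrow>
      (\<integral>x. (F ((T ^^ i) x) - \<mu>) * (F ((T ^^ j) x) - \<mu>) \<partial>M) = (if i = j then v else 0)"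
begin

definition centered :: "nat \<Rightarrow> 'a \<Rightarrow> real" where
  "centered i x = F ((T ^^ i) x) - \<mu>"

lemmas funpow_measurable [measurable] = mpt_funpow_measurable[OF mpt]

lemma variance_nonneg: "0 \<le> v"
proof -
  have "0 \<le> (\<integral>x. (F x - \<mu>) * (F x - \<mu>) \<partial>M)"
    by (intro Bochner_Integration.integral_nonneg) simp
  moreover have "(\<integral>x. (F x - \<mu>) * (F x - \<mu>) \<partial>M) = v"
    using cov[of 0 0] d_pos by simp
  ultimately show ?thesis
    by simp
qed

lemma integral_square_sum_centered:
  assumes "I \<subseteq> {..<2 * d}"
  shows "(\<integral>x. (\<Sum>i\<in>I. w i * centered i x)\<^sup>2 \<partial>M) = v * (\<Sum>i\<in>I. (w i)\<^sup>2)"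
    and "integrable M (\<lambda>x. (\<Sum>i\<in>I. w i * centered i x)\<^sup>2)"
  using assms finite_subset[OF assms]
  by (auto simp: centered_def intro!: integral_square_sum_orthogonal cov_integrable cov)

lemma birkhoff_sum_coboundary:
  "birkhoff_sum T m (\<lambda>y. F y - F ((T ^^ d) y)) x = (\<Sum>i<m. centered i x - centered (i + d) x)"
proof -
  have "(T ^^ d) ((T ^^ i) x) = (T ^^ (i + d)) x" for i
    by (simp add: add.commute[of i d] funpow_add)
  then show ?thesis
    unfolding birkhoff_sum_def centered_def by (simp add: sum_subtractf)
qed

lemma integral_birkhoff_coboundary_short:
  assumes "m \<le> d"
  shows "(\<integral>x. (birkhoff_sum T m (\<lambda>y. F y - F ((T ^^ d) y)) x)\<^sup>2 \<partial>M) \<le> 2 * real m * v"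
proof -
  define I where "I = {..<m} \<union> {d..<d + m}"
  define w :: "nat \<Rightarrow> real" where "w i = (if i < d then 1 else -1)" for i
  have w_square: "(w i)\<^sup>2 = 1" for i
    by (simp add: w_def)
  have "birkhoff_sum T m (\<lambda>y. F y - F ((T ^^ d) y)) x = (\<Sum>i\<in>I. w i * centered i x)" for x
    using sum_diff_shift_disjoint[OF assms, of "\<lambda>i. centered i x"]
    by (simp add: birkhoff_sum_coboundary I_def w_def)
  then have "(\<integral>x. (birkhoff_sum T m (\<lambda>y. F y - F ((T ^^ d) y)) x)\<^sup>2 \<partial>M)
      = (\<integral>x. (\<Sum>i\<in>I. w i * centered i x)\<^sup>2 \<partial>M)"
    by simp
  also have "\<dots> = v * (\<Sum>i\<in>I. (w i)\<^sup>2)"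
    using assms by (intro integral_square_sum_centered) (auto simp: I_def)
  also have "(\<Sum>i\<in>I. (w i)\<^sup>2) = card I"
    by (simp add: w_square)
  also have "card I \<le> 2 * m"
    using card_Un_le[of "{..<m}" "{d..<d + m}"] by (simp add: I_def)
  finally show ?thesis
    using variance_nonneg by (simp add: mult_left_mono mult.commute)
qed

lemma integral_birkhoff_coboundary_long:
  assumes "d \<le> m"
  shows "(\<integral>x. (birkhoff_sum T m (\<lambda>y. F y - F ((T ^^ d) y)) x)\<^sup>2 \<partial>M) \<le> 4 * real d * v"
proof -
  define A where "A x = (\<Sum>i<d. 1 * centered i x)" for x
  have A2: "(\<integral>x. (A x)\<^sup>2 \<partial>M) = d * v" "integrable M (\<lambda>x. (A x)\<^sup>2)"
    using integral_square_sum_centered[of "{..<d}" "\<lambda>_. 1"] by (auto simp: A_def)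
  have A2_shift: "(\<integral>x. (A ((T ^^ m) x))\<^sup>2 \<partial>M) = d * v" "integrable M (\<lambda>x. (A ((T ^^ m) x))\<^sup>2)"
    using A2 mpt_integral_comp[OF mpt_funpow[OF mpt], of "\<lambda>x. (A x)\<^sup>2" m]
      mpt_integrable_comp_iff[OF mpt_funpow[OF mpt], of "\<lambda>x. (A x)\<^sup>2" m]
    by (simp_all add: A_def)
  have telescoped: "birkhoff_sum T m (\<lambda>y. F y - F ((T ^^ d) y)) x = A x - A ((T ^^ m) x)" for x
    using sum_diff_shift_telescope[OF assms, of "\<lambda>i. centered i x"]
    by (simp add: birkhoff_sum_coboundary A_def centered_def funpow_add)
  have "(\<integral>x. (birkhoff_sum T m (\<lambda>y. F y - F ((T ^^ d) y)) x)\<^sup>2 \<partial>M)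
      \<le> (\<integral>x. 2 * (A x)\<^sup>2 + 2 * (A ((T ^^ m) x))\<^sup>2 \<partial>M)"
  proof (rule integral_mono')
    show "integrable M (\<lambda>x. 2 * (A x)\<^sup>2 + 2 * (A ((T ^^ m) x))\<^sup>2)"
      using A2(2) A2_shift(2) by simp
    fix x
    show "(birkhoff_sum T m (\<lambda>y. F y - F ((T ^^ d) y)) x)\<^sup>2 \<le> 2 * (A x)\<^sup>2 + 2 * (A ((T ^^ m) x))\<^sup>2"
      unfolding telescoped
      using zero_le_power2[of "A x + A ((T ^^ m) x)"] by (simp add: power2_eq_square algebra_simps)
  qed simp
  also have "\<dots> = 4 * real d * v"
    using A2 A2_shift by simp
  finally show ?thesis .
qed

lemma integral_birkhoff_coboundary_le:
  "(\<integral>x. (birkhoff_sum T m (\<lambda>y. F y - F ((T ^^ d) y)) x)\<^sup>2 \<partial>M) \<le> 4 * real m * v"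
proof (cases "m \<le> d")
  case True
  then have "(\<integral>x. (birkhoff_sum T m (\<lambda>y. F y - F ((T ^^ d) y)) x)\<^sup>2 \<partial>M) \<le> 2 * real m * v"
    by (rule integral_birkhoff_coboundary_short)
  also have "\<dots> \<le> 4 * real m * v"
    using variance_nonneg by (intro mult_right_mono) auto
  finally show ?thesis .
next
  case False
  then have "(\<integral>x. (birkhoff_sum T m (\<lambda>y. F y - F ((T ^^ d) y)) x)\<^sup>2 \<partial>M) \<le> 4 * real d * v"
    by (intro integral_birkhoff_coboundary_long) simp
  also have "\<dots> \<le> 4 * real m * v"
    using False variance_nonneg by (intro mult_right_mono) auto
  finally show ?thesis .
qed

lemma integral_birkhoff_coboundary_increment_le:
  assumes "l \<le> j"
  shows "(\<integral>x. (birkhoff_sum T j (\<lambda>y. F y - F ((T ^^ d) y)) x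
      - birkhoff_sum T l (\<lambda>y. F y - F ((T ^^ d) y)) x)\<^sup>2 \<partial>M) \<le> 4 * real (j - l) * v"
proof -
  define m where "m = j - l"
  have j: "j = l + m"
    using assms by (simp add: m_def)
  have meas: "(\<lambda>x. (birkhoff_sum T m (\<lambda>y. F y - F ((T ^^ d) y)) x)\<^sup>2) \<in> borel_measurable M"
    unfolding birkhoff_sum_def by measurable
  have "(\<integral>x. (birkhoff_sum T j (\<lambda>y. F y - F ((T ^^ d) y)) x
      - birkhoff_sum T l (\<lambda>y. F y - F ((T ^^ d) y)) x)\<^sup>2 \<partial>M)
      = (\<integral>x. (birkhoff_sum T m (\<lambda>y. F y - F ((T ^^ d) y)) ((T ^^ l) x))\<^sup>2 \<partial>M)"
    unfolding j birkhoff_sum_add by simp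
  also have "\<dots> = (\<integral>x. (birkhoff_sum T m (\<lambda>y. F y - F ((T ^^ d) y)) x)\<^sup>2 \<partial>M)"
    using mpt_integral_comp[OF mpt_funpow[OF mpt] meas] .
  also have "\<dots> \<le> 4 * real m * v"
    by (rule integral_birkhoff_coboundary_le)
  finally show ?thesis
    by (simp add: m_def)
qed

end

lemma distr_eq_integral_comp:
  fixes G :: "'c \<Rightarrow> real"
  assumes eq: "distr M N \<Phi> = distr P N \<Psi>"
    and \<Phi>: "\<Phi> \<in> M \<rightarrow>\<^sub>M N" and \<Psi>: "\<Psi> \<in> P \<rightarrow>\<^sub>M N" and G: "G \<in> borel_measurable N"
  shows "(\<integral>x. G (\<Phi> x) \<partial>M) = (\<integral>w. G (\<Psi> w) \<partial>P)"
    and "integrable M (\<lambda>x. G (\<Phi> x)) \<longleftrightarrow> integrable P (\<lambda>w. G (\<Psi> w))"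
proof -
  show "(\<integral>x. G (\<Phi> x) \<partial>M) = (\<integral>w. G (\<Psi> w) \<partial>P)"
    using integral_distr[OF \<Phi> G] integral_distr[OF \<Psi> G] eq by metis
  show "integrable M (\<lambda>x. G (\<Phi> x)) \<longleftrightarrow> integrable P (\<lambda>w. G (\<Psi> w))"
    using integrable_distr_eq[OF \<Phi> G] integrable_distr_eq[OF \<Psi> G] eq by metis
qed

lemma (in prob_space) indep_vars_integral_mult:
  fixes X :: "'i \<Rightarrow> 'a \<Rightarrow> real"
  assumes "indep_vars (\<lambda>_. borel) X I" "i \<in> I" "j \<in> I" "i \<noteq> j"
    and "integrable M (X i)" "integrable M (X j)"
  shows "(\<integral>\<omega>. X i \<omega> * X j \<omega> \<partial>M) = (\<integral>\<omega>. X i \<omega> \<partial>M) * (\<integral>\<omega>. X j \<omega> \<partial>M)"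
proof -
  have "indep_vars (\<lambda>_. borel) X {i, j}"
    using assms by (intro indep_vars_subset[OF assms(1)]) auto
  then have "(\<integral>\<omega>. (\<Prod>p\<in>{i, j}. X p \<omega>) \<partial>M) = (\<Prod>p\<in>{i, j}. \<integral>\<omega>. X p \<omega> \<partial>M)"
    using assms by (intro indep_vars_lebesgue_integral) auto
  then show ?thesis
    using assms(4) by simp
qed

locale admissible_coupling =
  fixes M :: "'a measure" and T :: "'a \<Rightarrow> 'a" and f :: "nat \<Rightarrow> 'a \<Rightarrow> real"
    and P :: "'b measure" and X :: "nat \<Rightarrow> nat \<Rightarrow> 'b \<Rightarrow> real"
  assumes M: "prob_space M" and mpt: "mpt M T"
    and f_measurable [measurable]: "\<And>k. f k \<in> borel_measurable M"
    and P: "prob_space P"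
    and indep: "prob_space.indep_vars P (\<lambda>_. borel) (\<lambda>(k, m). X k m) {(k, m). 1 \<le> k \<and> 1 \<le> m}"
    and law_eq: "distr M (PiM adm_index (\<lambda>_. borel)) (\<lambda>x. \<lambda>i \<in> adm_index. f (fst i) ((T ^^ snd i) x))
      = distr P (PiM adm_index (\<lambda>_. borel)) (\<lambda>\<omega>. \<lambda>i \<in> adm_index. Zdisc (fst i) (X (fst i) (snd i + 1) \<omega>))"
begin

lemma X_measurable: "1 \<le> k \<Longrightarrow> 1 \<le> m \<Longrightarrow> X k m \<in> borel_measurable P"
  using indep unfolding prob_space.indep_vars_def2[OF P] by auto

lemmas funpow_measurable [measurable] = mpt_funpow_measurable[OF mpt]

lemma Zdisc_X_integrable: "1 \<le> k \<Longrightarrow> 1 \<le> m \<Longrightarrow> integrable P (\<lambda>\<omega>. Zdisc k (X k m \<omega>))"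
  by (rule finite_measure.integrable_const_bound[OF prob_space.axioms(1)[OF P], where B="4 ^ k"])
     (auto simp: Zdisc_le abs_of_nonneg[OF Zdisc_nonneg] intro: measurable_compose[OF X_measurable Zdisc_measurable])

lemma orbit_law:
  fixes G :: "(nat \<times> nat \<Rightarrow> real) \<Rightarrow> real"
  assumes "G \<in> borel_measurable (PiM adm_index (\<lambda>_. borel))"
  shows "(\<integral>x. G (\<lambda>i \<in> adm_index. f (fst i) ((T ^^ snd i) x)) \<partial>M)
      = (\<integral>\<omega>. G (\<lambda>i \<in> adm_index. Zdisc (fst i) (X (fst i) (snd i + 1) \<omega>)) \<partial>P)"
    and "integrable M (\<lambda>x. G (\<lambda>i \<in> adm_index. f (fst i) ((T ^^ snd i) x)))
      \<longleftrightarrow> integrable P (\<lambda>\<omega>. G (\<lambda>i \<in> adm_index. Zdisc (fst i) (X (fst i) (snd i + 1) \<omega>)))"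
proof -
  have "(\<lambda>x. \<lambda>i \<in> adm_index. f (fst i) ((T ^^ snd i) x)) \<in> M \<rightarrow>\<^sub>M PiM adm_index (\<lambda>_. borel)"
    by (intro measurable_restrict measurable_compose[OF funpow_measurable f_measurable])
  moreover have "(\<lambda>\<omega>. \<lambda>i \<in> adm_index. Zdisc (fst i) (X (fst i) (snd i + 1) \<omega>)) \<in> P \<rightarrow>\<^sub>M PiM adm_index (\<lambda>_. borel)"
  proof (intro measurable_restrict)
    fix i
    assume "i \<in> adm_index"
    then have "X (fst i) (snd i + 1) \<in> borel_measurable P"
      by (intro X_measurable) (auto simp: adm_index_def)
    then show "(\<lambda>\<omega>. Zdisc (fst i) (X (fst i) (snd i + 1) \<omega>)) \<in> borel_measurable P"
      using Zdisc_measurable by (rule measurable_compose)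
  qed
  ultimately show "(\<integral>x. G (\<lambda>i \<in> adm_index. f (fst i) ((T ^^ snd i) x)) \<partial>M)
      = (\<integral>\<omega>. G (\<lambda>i \<in> adm_index. Zdisc (fst i) (X (fst i) (snd i + 1) \<omega>)) \<partial>P)"
    and "integrable M (\<lambda>x. G (\<lambda>i \<in> adm_index. f (fst i) ((T ^^ snd i) x)))
      \<longleftrightarrow> integrable P (\<lambda>\<omega>. G (\<lambda>i \<in> adm_index. Zdisc (fst i) (X (fst i) (snd i + 1) \<omega>)))"
    by (rule distr_eq_integral_comp[OF law_eq _ _ assms])+
qed

lemma orbit_index: "1 \<le> k \<Longrightarrow> i < 2 * dk k \<Longrightarrow> (k, i) \<in> adm_index"
  by (simp add: adm_index_def)

lemma orbit_integral:
  assumes "1 \<le> k" "i < 2 * dk k"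
  shows "integrable M (\<lambda>x. f k ((T ^^ i) x))"
    and "(\<integral>x. f k ((T ^^ i) x) \<partial>M) = (\<integral>\<omega>. Zdisc k (X k (i + 1) \<omega>) \<partial>P)"
proof -
  note idx = orbit_index[OF assms]
  define G where "G y = y (k, i)" for y :: "nat \<times> nat \<Rightarrow> real"
  have G: "G \<in> borel_measurable (PiM adm_index (\<lambda>_. borel))"
    unfolding G_def using idx by measurable
  show "integrable M (\<lambda>x. f k ((T ^^ i) x))"
    using orbit_law(2)[OF G] Zdisc_X_integrable[of k "i + 1"] idx assms(1) by (simp add: G_def)
  show "(\<integral>x. f k ((T ^^ i) x) \<partial>M) = (\<integral>\<omega>. Zdisc k (X k (i + 1) \<omega>) \<partial>P)"
    using orbit_law(1)[OF G] idx by (simp add: G_def)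
qed

lemma orbit_product_integral:
  assumes "1 \<le> k" "i < 2 * dk k" "j < 2 * dk k"
  shows "integrable M (\<lambda>x. f k ((T ^^ i) x) * f k ((T ^^ j) x))"
    and "(\<integral>x. f k ((T ^^ i) x) * f k ((T ^^ j) x) \<partial>M)
      = (\<integral>\<omega>. Zdisc k (X k (i + 1) \<omega>) * Zdisc k (X k (j + 1) \<omega>) \<partial>P)"
proof -
  note idx = orbit_index[OF assms(1,2)] orbit_index[OF assms(1,3)]
  define G where "G y = y (k, i) * y (k, j)" for y :: "nat \<times> nat \<Rightarrow> real"
  have G: "G \<in> borel_measurable (PiM adm_index (\<lambda>_. borel))"
    unfolding G_def using idx by measurable
  have "integrable P (\<lambda>\<omega>. Zdisc k (X k (i + 1) \<omega>) * Zdisc k (X k (j + 1) \<omega>))"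
  proof (rule finite_measure.integrable_const_bound[OF prob_space.axioms(1)[OF P], where B="4 ^ k * 4 ^ k"])
    show "AE \<omega> in P. norm (Zdisc k (X k (i + 1) \<omega>) * Zdisc k (X k (j + 1) \<omega>)) \<le> 4 ^ k * 4 ^ k"
      by (auto simp: abs_mult abs_of_nonneg[OF Zdisc_nonneg] intro!: AE_I2 mult_mono Zdisc_le Zdisc_nonneg)
    show "(\<lambda>\<omega>. Zdisc k (X k (i + 1) \<omega>) * Zdisc k (X k (j + 1) \<omega>)) \<in> borel_measurable P"
      using assms(1) by (intro borel_measurable_times measurable_compose[OF X_measurable Zdisc_measurable]) auto
  qed
  then show "integrable M (\<lambda>x. f k ((T ^^ i) x) * f k ((T ^^ j) x))"
    using orbit_law(2)[OF G] idx by (simp add: G_def)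
  show "(\<integral>x. f k ((T ^^ i) x) * f k ((T ^^ j) x) \<partial>M)
      = (\<integral>\<omega>. Zdisc k (X k (i + 1) \<omega>) * Zdisc k (X k (j + 1) \<omega>) \<partial>P)"
    using orbit_law(1)[OF G] idx by (simp add: G_def)
qed

lemma orbit_mean: "(\<integral>x. f k ((T ^^ i) x) \<partial>M) = (\<integral>x. f k x \<partial>M)"
  using mpt_integral_comp[OF mpt_funpow[OF mpt] f_measurable] .

lemma orbit_product_integral_distinct:
  assumes "1 \<le> k" "i < 2 * dk k" "j < 2 * dk k" "i \<noteq> j"
  shows "(\<integral>x. f k ((T ^^ i) x) * f k ((T ^^ j) x) \<partial>M) = (\<integral>x. f k x \<partial>M)\<^sup>2"
proof -
  interpret P: prob_space P by (rule P)
  have indep_Z: "P.indep_vars (\<lambda>_. borel) (\<lambda>p \<omega>. Zdisc (fst p) ((\<lambda>(k, m). X k m) p \<omega>)) {(k, m). 1 \<le> k \<and> 1 \<le> m}"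
    by (rule P.indep_vars_compose2[OF indep]) simp
  have "(\<integral>\<omega>. Zdisc k (X k (i + 1) \<omega>) * Zdisc k (X k (j + 1) \<omega>) \<partial>P)
      = (\<integral>\<omega>. Zdisc k (X k (i + 1) \<omega>) \<partial>P) * (\<integral>\<omega>. Zdisc k (X k (j + 1) \<omega>) \<partial>P)"
    using P.indep_vars_integral_mult[OF indep_Z, of "(k, i + 1)" "(k, j + 1)"] assms
    by (simp add: Zdisc_X_integrable)
  then show ?thesis
    using orbit_product_integral(2)[OF assms(1-3)] orbit_integral(2)[OF assms(1,2)]
      orbit_integral(2)[OF assms(1,3)] orbit_mean[of k i] orbit_mean[of k j]
    by (simp add: power2_eq_square)
qed

lemma uncorrelated_block_orbit:
  assumes k: "1 \<le> k"
  shows "uncorrelated_block M T (f k) (\<integral>x. f k x \<partial>M)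
    ((\<integral>x. (f k x)\<^sup>2 \<partial>M) - (\<integral>x. f k x \<partial>M)\<^sup>2) (dk k)"
proof
  interpret M: prob_space M by (rule M)
  define \<mu> where "\<mu> = (\<integral>x. f k x \<partial>M)"
  fix i j
  assume ij: "i < 2 * dk k" "j < 2 * dk k"
  have expand: "(f k ((T ^^ i) x) - \<mu>) * (f k ((T ^^ j) x) - \<mu>)
      = f k ((T ^^ i) x) * f k ((T ^^ j) x) - \<mu> * f k ((T ^^ i) x) - \<mu> * f k ((T ^^ j) x) + \<mu>\<^sup>2" for x
    by (simp add: algebra_simps power2_eq_square)
  note ints = orbit_integral(1)[OF k ij(1)] orbit_integral(1)[OF k ij(2)] orbit_product_integral(1)[OF k ij]
  show "integrable M (\<lambda>x. (f k ((T ^^ i) x) - \<integral>x. f k x \<partial>M) * (f k ((T ^^ j) x) - \<integral>x. f k x \<partial>M))"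
    unfolding \<mu>_def[symmetric] expand using ints by simp
  have "(\<integral>x. (f k ((T ^^ i) x) - \<mu>) * (f k ((T ^^ j) x) - \<mu>) \<partial>M)
      = (\<integral>x. f k ((T ^^ i) x) * f k ((T ^^ j) x) \<partial>M) - \<mu>\<^sup>2"
    unfolding expand using ints by (simp add: orbit_mean \<mu>_def power2_eq_square M.prob_space)
  also have "\<dots> = (if i = j then (\<integral>x. (f k x)\<^sup>2 \<partial>M) - \<mu>\<^sup>2 else 0)"
  proof (cases "i = j")
    case True
    have "(\<lambda>x. (f k x)\<^sup>2) \<in> borel_measurable M"
      by measurable
    then show ?thesis
      using True mpt_integral_comp[OF mpt_funpow[OF mpt], of "\<lambda>x. (f k x)\<^sup>2" i]
      by (simp add: power2_eq_square)
  qed (simp add: orbit_product_integral_distinct[OF k ij] \<mu>_def)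
  finally show "(\<integral>x. (f k ((T ^^ i) x) - \<integral>x. f k x \<partial>M) * (f k ((T ^^ j) x) - \<integral>x. f k x \<partial>M) \<partial>M)
      = (if i = j then (\<integral>x. (f k x)\<^sup>2 \<partial>M) - (\<integral>x. f k x \<partial>M)\<^sup>2 else 0)"
    by (simp add: \<mu>_def)
qed (simp_all add: mpt dk_def)

lemma orbit_second_moment_le:
  assumes k: "1 \<le> k" and \<alpha>: "0 < \<alpha>"
    and char_X: "char (distr P borel (X k 1)) = stable_cf \<alpha> (real k powr (-1/\<alpha>)) 1 0"
  shows "(\<integral>x. (f k x)\<^sup>2 \<partial>M) \<le> 3 * (3 + (tan (pi * \<alpha> / 2))\<^sup>2) * 4 powr ((2 - \<alpha>) * k) / k"
proof -
  have "(\<integral>x. (f k x)\<^sup>2 \<partial>M) = (\<integral>\<omega>. (Zdisc k (X k 1 \<omega>))\<^sup>2 \<partial>P)"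
    using orbit_product_integral(2)[OF k, of 0 0] by (simp add: dk_def power2_eq_square)
  also have "\<dots> = (\<integral>y. (Zdisc k y)\<^sup>2 \<partial>distr P borel (X k 1))"
    using k by (intro integral_distr[symmetric] X_measurable) auto
  also have "\<dots> \<le> 3 * (3 + (tan (pi * \<alpha> / 2))\<^sup>2) * 4 powr ((2 - \<alpha>) * k) / k"
    using k X_measurable[OF k]
    by (intro stable_Zdisc_second_moment_le[OF _ char_X \<alpha>] prob_space.real_distribution_distr[OF P]) auto
  finally show ?thesis .
qed

lemma orbit_coboundary_increment_le:
  assumes k: "1 \<le> k" and \<alpha>: "0 < \<alpha>" and "l \<le> j"
    and char_X: "char (distr P borel (X k 1)) = stable_cf \<alpha> (real k powr (-1/\<alpha>)) 1 0"
  shows "(\<integral>x. (birkhoff_sum T j (\<lambda>y. f k y - f k ((T ^^ dk k) y)) x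
      - birkhoff_sum T l (\<lambda>y. f k y - f k ((T ^^ dk k) y)) x)\<^sup>2 \<partial>M)
    \<le> 12 * (3 + (tan (pi * \<alpha> / 2))\<^sup>2) * real (j - l) * 4 powr ((2 - \<alpha>) * k) / k"
proof -
  interpret uncorrelated_block M T "f k" "\<integral>x. f k x \<partial>M"
    "(\<integral>x. (f k x)\<^sup>2 \<partial>M) - (\<integral>x. f k x \<partial>M)\<^sup>2" "dk k"
    by (rule uncorrelated_block_orbit[OF k])
  have "(\<integral>x. (f k x)\<^sup>2 \<partial>M) - (\<integral>x. f k x \<partial>M)\<^sup>2
      \<le> 3 * (3 + (tan (pi * \<alpha> / 2))\<^sup>2) * 4 powr ((2 - \<alpha>) * k) / k"
    using orbit_second_moment_le[OF k \<alpha> char_X] zero_le_power2[of "\<integral>x. f k x \<partial>M"] by linarith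
  then have "4 * real (j - l) * ((\<integral>x. (f k x)\<^sup>2 \<partial>M) - (\<integral>x. f k x \<partial>M)\<^sup>2)
      \<le> 4 * real (j - l) * (3 * (3 + (tan (pi * \<alpha> / 2))\<^sup>2) * 4 powr ((2 - \<alpha>) * k) / k)"
    by (intro mult_left_mono) auto
  with integral_birkhoff_coboundary_increment_le[OF \<open>l \<le> j\<close>] show ?thesis
    by (simp add: algebra_simps)
qed

end

theorem lemma4p9:
  fixes M :: "'a measure" and T :: "'a \<Rightarrow> 'a" and f :: "nat \<Rightarrow> 'a \<Rightarrow> real" and \<alpha> :: real
  assumes "prob_space M" and "mpt M T" and "ergodic M T" and "aperiodic M T"
    and "1 \<le> \<alpha>" and "\<alpha> < 2"
    and "admissible \<alpha> M T f"
  shows "\<exists>C > 0. \<forall>n l j k. 1 \<le> l \<longrightarrow> l < j \<longrightarrow> j \<le> n \<longrightarrow> 1 \<le> k \<longrightarrow> real k \<le> sqrt (log 2 (real n)) \<longrightarrow>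
     (\<integral>x. (birkhoff_sum T j (\<lambda>y. f k y - f k ((T ^^ dk k) y)) x
            - birkhoff_sum T l (\<lambda>y. f k y - f k ((T ^^ dk k) y)) x)\<^sup>2 \<partial>M)
     \<le> C * real (j - l) * 4 powr ((2 - \<alpha>) * real k) / real k"
proof -
  obtain P :: "(nat \<Rightarrow> nat \<Rightarrow> real) measure" and X
    where coupling: "admissible_coupling M T f P X"
      and char_X: "\<And>k m. 1 \<le> k \<Longrightarrow> 1 \<le> m \<Longrightarrow>
        char (distr P borel (X k m)) = stable_cf \<alpha> (real k powr (-1 / \<alpha>)) 1 0"
    using assms(1,2,7) unfolding admissible_def admissible_coupling_def by blast
  have \<alpha>: "0 < \<alpha>"
    using assms(5) by simp
  show ?thesis
  proof (intro exI conjI allI impI)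
    show "0 < 12 * (3 + (tan (pi * \<alpha> / 2))\<^sup>2)"
      by (simp add: add_pos_nonneg)
    fix n l j k :: nat
    assume "1 \<le> l" "l < j" "j \<le> n" "1 \<le> k" "real k \<le> sqrt (log 2 (real n))"
    then show "(\<integral>x. (birkhoff_sum T j (\<lambda>y. f k y - f k ((T ^^ dk k) y)) x
            - birkhoff_sum T l (\<lambda>y. f k y - f k ((T ^^ dk k) y)) x)\<^sup>2 \<partial>M)
        \<le> 12 * (3 + (tan (pi * \<alpha> / 2))\<^sup>2) * real (j - l) * 4 powr ((2 - \<alpha>) * real k) / real k"
      using admissible_coupling.orbit_coboundary_increment_le[OF coupling _ \<alpha> _ char_X] by simp
  qed
qed

end
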